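(* Let $k$ be a field and $s,t$ indeterminates over $k$. For $i\geq 1$ let $\tau_i=(-1)^i\left(t^i+st^{i-1}+\dots+s^{i-1}t+s^i\right)\in k[s,t]$. (i) For every $i\geq 1$, let $\overline{A}_i$ be the $i\times(i+2)$ matrix over $k[s,t]$ whose $r$-th row ($1\le r\le i$) has entry $s$ in column $r$, entry $-(t+s)$ in column $r+1$, entry $t$ in column $r+2$, and $0$ elsewhere, and let $B_i$ be the $i\times i$ submatrix of $\overline{A}_i$ obtained by deleting its first and last columns. Then $\det B_i=\tau_i$. (ii) Let $\mathcal{S}$ be an infinite set of positive integers. Suppose that either $k$ has characteristic zero, or $k$ has prime characteristic $p$ and $\mathcal{S}$ contains infinitely many integers of the form $p^m-2$ ($m$ a positive integer). Then the set of irreducible factors in $k[s,t]$ of the polynomials $\tau_i$, $i\in\mathcal{S}$, is infinite. *)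

theory Defs
  imports "HOL-Computational_Algebra.Polynomial_Factorial" "Jordan_Normal_Form.Determinant"
begin

text \<open>Bivariate polynomials k[s,t] are modelled as k[s][t], i.e. type 'a poly poly:
  the outer variable is t, the inner variable is s.\<close>

definition var_s :: "'a::comm_ring_1 poly poly" where
  "var_s = [: [:0, 1:] :]"

definition var_t :: "'a::comm_ring_1 poly poly" where
  "var_t = [:0, 1:]"

definition tau :: "nat \<Rightarrow> 'a::comm_ring_1 poly poly" where
  "tau i = (-1) ^ i * (\<Sum>j = 0..i. var_s ^ j * var_t ^ (i - j))"

definition Abar :: "nat \<Rightarrow> 'a::comm_ring_1 poly poly mat" where
  "Abar i = mat i (i + 2) (\<lambda>(r, c).
     if c = r then var_s
     else if c = r + 1 then - (var_t + var_s)
     else if c = r + 2 then var_t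
     else 0)"

definition Bmat :: "nat \<Rightarrow> 'a::comm_ring_1 poly poly mat" where
  "Bmat i = mat i i (\<lambda>(r, c). Abar i $$ (r, c + 1))"

end

theory Submission
  imports Defs "HOL-Computational_Algebra.Squarefree"
begin

text \<open>Expanding \<open>det B\<^sub>i\<close> along its last column gives the recurrence
  \<open>d\<^sub>i\<^sub>+\<^sub>2 = -(s + t) d\<^sub>i\<^sub>+\<^sub>1 - s t d\<^sub>i\<close>, which \<open>\<tau>\<^sub>i\<close> satisfies as well.
  For (ii), \<open>(t - s) \<tau>\<^sub>i = \<plusminus>(t\<^sup>i\<^sup>+\<^sup>1 - s\<^sup>i\<^sup>+\<^sup>1)\<close>; viewed as a polynomial in \<open>t\<close> over \<open>k[s]\<close>
  its derivative is \<open>(i + 1) t\<^sup>i\<close>, so it is squarefree whenever \<open>i + 1 \<noteq> 0\<close> in \<open>k\<close>, and so is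
  \<open>\<tau>\<^sub>i\<close>. The hypotheses give infinitely many such \<open>i \<in> S\<close> (note \<open>p\<^sup>m - 1\<close> is prime to \<open>p\<close>).
  Squarefree polynomials all of whose prime factors lie in a finite set divide the product
  of that set, so their degrees are bounded; but \<open>deg\<^sub>t \<tau>\<^sub>i = i\<close>.\<close>

definition complete_hom :: "nat \<Rightarrow> 'a::comm_ring_1 poly poly" where
  "complete_hom i = (\<Sum>j = 0..i. var_s ^ j * var_t ^ (i - j))"

lemma tau_eq_complete_hom: "tau i = (-1) ^ i * complete_hom i"
  unfolding tau_def complete_hom_def ..

lemma complete_hom_Suc: "complete_hom (Suc i) = var_t * complete_hom i + var_s ^ Suc i"
proof -
  have "complete_hom (Suc i) = (\<Sum>j = 0..i. var_s ^ j * var_t ^ (Suc i - j)) + var_s ^ Suc i"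
    unfolding complete_hom_def by (simp add: sum.atLeast0_atMost_Suc)
  also have "(\<Sum>j = 0..i. var_s ^ j * var_t ^ (Suc i - j)) = var_t * complete_hom i"
    unfolding complete_hom_def sum_distrib_left
    by (rule sum.cong) (auto simp: Suc_diff_le mult_ac)
  finally show ?thesis .
qed

lemma tau_Suc_Suc: "tau (Suc (Suc i)) = - (var_t + var_s) * tau (Suc i) - var_s * var_t * tau i"
  unfolding tau_eq_complete_hom complete_hom_Suc by (simp add: algebra_simps)

lemma Bmat_carrier: "Bmat i \<in> carrier_mat i i"
  unfolding Bmat_def by simp

lemma dim_Bmat [simp]: "dim_row (Bmat i) = i" "dim_col (Bmat i) = i"
  unfolding Bmat_def by simp_all

lemma Bmat_index:
  "r < i \<Longrightarrow> c < i \<Longrightarrow> Bmat i $$ (r, c) =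
    (if c + 1 = r then var_s else if c = r then - (var_t + var_s) else if c = r + 1 then var_t else 0)"
  unfolding Bmat_def Abar_def by auto

lemma det_Bmat_Suc_Suc:
  "det (Bmat (Suc (Suc n)) :: 'a::comm_ring_1 poly poly mat) =
    - (var_t + var_s) * det (Bmat (Suc n)) - var_t * var_s * det (Bmat n)"
proof -
  let ?B = "Bmat (Suc (Suc n)) :: 'a poly poly mat"
  \<comment> \<open>the minor of the entry \<open>t\<close> in the last column; its own last row is \<open>(0, \<dots>, 0, s)\<close>\<close>
  define M where "M = mat_delete ?B n (Suc n)"
  have M_carrier: "M \<in> carrier_mat (Suc n) (Suc n)"
    unfolding M_def using mat_delete_carrier[OF Bmat_carrier[of "Suc (Suc n)"]] by simp
  have delete_last: "mat_delete ?B (Suc n) (Suc n) = Bmat (Suc n)"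
    by (rule eq_matI) (auto simp: mat_delete_def Bmat_index)
  have delete_M: "mat_delete M n n = Bmat n"
    by (rule eq_matI) (auto simp: M_def mat_delete_def Bmat_index)
  have "det M = (\<Sum>c<Suc n. M $$ (n, c) * cofactor M n c)"
    by (rule laplace_expansion_row[OF M_carrier]) simp
  also have "\<dots> = (\<Sum>c<Suc n. if c = n then var_s * cofactor M n n else 0)"
    by (rule sum.cong) (auto simp: M_def mat_delete_def Bmat_index)
  also have "\<dots> = var_s * det (Bmat n)"
    by (simp add: cofactor_def delete_M)
  finally have det_M: "det M = var_s * det (Bmat n)" .
  have "det ?B = (\<Sum>r<Suc (Suc n). ?B $$ (r, Suc n) * cofactor ?B r (Suc n))"
    by (rule laplace_expansion_column[OF Bmat_carrier]) simp
  also have "\<dots> = (\<Sum>r<n. ?B $$ (r, Suc n) * cofactor ?B r (Suc n))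
      + ?B $$ (n, Suc n) * cofactor ?B n (Suc n)
      + ?B $$ (Suc n, Suc n) * cofactor ?B (Suc n) (Suc n)"
    by simp
  also have "(\<Sum>r<n. ?B $$ (r, Suc n) * cofactor ?B r (Suc n)) = 0"
    by (rule sum.neutral) (simp add: Bmat_index)
  also have "?B $$ (n, Suc n) * cofactor ?B n (Suc n) = - var_t * det M"
    by (simp add: Bmat_index cofactor_def M_def)
  also have "?B $$ (Suc n, Suc n) * cofactor ?B (Suc n) (Suc n) = - (var_t + var_s) * det (Bmat (Suc n))"
    by (simp add: Bmat_index cofactor_def delete_last)
  finally show ?thesis using det_M by (simp add: algebra_simps)
qed

lemma det_Bmat: "det (Bmat i) = tau i"
proof (induction i rule: induct_nat_012)
  case 0
  show ?case using det_dim_zero[OF Bmat_carrier] by (simp add: tau_def)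
next
  case 1
  show ?case using det_single[OF Bmat_carrier] by (simp add: Bmat_index tau_def)
next
  case (ge2 n)
  then show ?case by (simp add: det_Bmat_Suc_Suc tau_Suc_Suc algebra_simps)
qed

lemma var_t_power: "var_t ^ n = monom 1 n"
  unfolding var_t_def by (simp add: monom_altdef)

lemma var_s_power: "var_s ^ n = [:[:0, 1:] ^ n:]"
  unfolding var_s_def by (induction n) simp_all

lemma diff_mult_complete_hom:
  "(var_t - var_s) * complete_hom i = (var_t ^ Suc i - var_s ^ Suc i :: 'a::comm_ring_1 poly poly)"
proof (induction i)
  case 0
  show ?case by (simp add: complete_hom_def)
next
  case (Suc i)
  have "(var_t - var_s) * complete_hom (Suc i) =
      var_t * ((var_t - var_s) * complete_hom i) + (var_t - var_s) * (var_s ^ Suc i :: 'a poly poly)"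
    by (simp only: complete_hom_Suc) (simp add: algebra_simps)
  also have "\<dots> = var_t ^ Suc (Suc i) - var_s ^ Suc (Suc i)"
    unfolding Suc.IH by (simp add: algebra_simps)
  finally show ?case .
qed

lemma degree_monom_diff_const:
  fixes c :: "'a::comm_ring_1"
  assumes "n > 0"
  shows "degree (monom 1 n - [:c:]) = n"
proof -
  have "degree (monom 1 n - [:c:]) = degree (monom 1 n + - [:c:])"
    by (simp only: diff_conv_add_uminus)
  also have "\<dots> = degree (monom 1 n :: 'a poly)"
    by (rule degree_add_eq_left) (simp add: degree_monom_eq assms)
  finally show ?thesis
    by (simp add: degree_monom_eq)
qed

lemma degree_tau: "degree (tau i :: 'a::idom poly poly) = i"
proof -
  have degree_diff_power: "degree (var_t ^ n - var_s ^ n :: 'a poly poly) = n" if "n > 0" for n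
    unfolding var_t_power var_s_power using that by (rule degree_monom_diff_const)
  have "Suc i = degree ((var_t - var_s) * complete_hom i :: 'a poly poly)"
    unfolding diff_mult_complete_hom by (rule degree_diff_power[symmetric]) simp
  also have "\<dots> = 1 + degree (complete_hom i :: 'a poly poly)"
    using calculation degree_diff_power[of 1] by (subst degree_mult_eq) auto
  finally show ?thesis
    unfolding tau_eq_complete_hom by (cases "even i") simp_all
qed

lemma dvd_pderiv_if_square_dvd:
  fixes p q :: "'a::idom poly"
  assumes "p ^ 2 dvd q"
  shows "p dvd pderiv q"
proof -
  obtain r where "q = p * p * r"
    using assms by (auto simp: power2_eq_square elim: dvdE)
  then have "pderiv q = p * (p * pderiv r + 2 * r * pderiv p)"
    by (simp add: pderiv_mult algebra_simps)
  then show ?thesis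
    by simp
qed

lemma squarefree_monom_diff_const:
  fixes c :: "'a::{idom_divide, algebraic_semidom}"
  assumes unit: "is_unit (of_nat n :: 'a)" and "c \<noteq> 0"
  shows "squarefree (monom 1 n - [:c:])"
proof (rule squarefreeI)
  fix y assume square_dvd: "y ^ 2 dvd monom 1 n - [:c:]"
  have "n > 0"
    using unit by (cases n) simp_all
  have "y dvd pderiv (monom 1 n - [:c:])"
    using square_dvd by (rule dvd_pderiv_if_square_dvd)
  also have "pderiv (monom 1 n - [:c:]) = [:of_nat n:] * monom 1 (n - 1)"
    by (simp add: pderiv_diff pderiv_monom smult_monom)
  finally have "y dvd [:of_nat n:] * monom 1 (n - 1)" .
  with unit have dvd_monom_pred: "y dvd monom 1 (n - 1)"
    by (metis dvd_mult_unit_iff' is_unit_const_poly_iff)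
  have "monom 1 n = monom 1 1 * (monom 1 (n - 1) :: 'a poly)"
    using \<open>n > 0\<close> by (simp add: mult_monom)
  then have "y dvd monom 1 n"
    using dvd_monom_pred by simp
  moreover have "y dvd monom 1 n - [:c:]"
    using square_dvd by (rule dvd_trans[rotated]) (simp add: power2_eq_square)
  ultimately have "y dvd monom 1 n - (monom 1 n - [:c:])"
    by (rule dvd_diff)
  then have "degree y = 0"
    using dvd_imp_degree_le[of y "[:c:]"] \<open>c \<noteq> 0\<close> by simp
  then obtain a where y: "y = [:a:]"
    by (rule degree_eq_zeroE)
  with dvd_monom_pred have "[:a:] dvd monom 1 (n - 1)"
    by simp
  then have "a dvd coeff (monom 1 (n - 1)) (n - 1)"
    unfolding const_poly_dvd_iff by blast
  then show "is_unit y"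
    by (simp add: y is_unit_const_poly_iff)
qed

lemma squarefree_tau:
  assumes "of_nat (Suc i) \<noteq> (0 :: 'a::field)"
  shows "squarefree (tau i :: 'a poly poly)"
proof -
  have "squarefree (var_t ^ Suc i - var_s ^ Suc i :: 'a poly poly)"
    unfolding var_t_power var_s_power
    by (rule squarefree_monom_diff_const) (use assms in \<open>simp_all add: of_nat_poly is_unit_const_poly_iff dvd_field_iff\<close>)
  moreover have "tau i dvd (complete_hom i :: 'a poly poly)"
    unfolding tau_eq_complete_hom by (subst mult_unit_dvd_iff') (auto intro: dvdI[of 1 _ "(-1) ^ i"])
  then have "tau i dvd (var_t ^ Suc i - var_s ^ Suc i :: 'a poly poly)"
    unfolding diff_mult_complete_hom[symmetric] by (rule dvd_mult)
  ultimately show ?thesis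
    by (rule squarefree_mono[rotated])
qed

lemma squarefree_dvd_prod_prime_factors:
  fixes x :: "'a::factorial_semiring"
  assumes "squarefree x"
  shows "x dvd \<Prod>(prime_factors x)"
proof (rule multiplicity_le_imp_dvd)
  show "x \<noteq> 0"
    using assms by auto
  have prod_nonzero: "\<Prod>(prime_factors x) \<noteq> 0"
    by (auto simp: prod_zero_iff)
  fix p :: 'a assume "prime p"
  show "multiplicity p x \<le> multiplicity p (\<Prod>(prime_factors x))"
  proof (cases "p dvd x")
    case False
    then show ?thesis
      by (simp add: not_dvd_imp_multiplicity_0)
  next
    case True
    with \<open>x \<noteq> 0\<close> \<open>prime p\<close> have "p dvd \<Prod>(prime_factors x)"
      by (intro dvd_prodI) (simp_all add: in_prime_factors_iff)
    with prod_nonzero \<open>prime p\<close> have "multiplicity p (\<Prod>(prime_factors x)) > 0"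
      by (simp add: prime_multiplicity_gt_zero_iff)
    moreover have "multiplicity p x \<le> 1"
      using assms \<open>x \<noteq> 0\<close> \<open>prime p\<close> by (simp add: squarefree_factorial_semiring'')
    ultimately show ?thesis
      by linarith
  qed
qed

lemma bounded_degree_if_finite_prime_factors:
  fixes f :: "'i \<Rightarrow> 'a::{factorial_ring_gcd, semiring_gcd_mult_normalize} poly"
  assumes finite: "finite (\<Union>i\<in>I. prime_factors (f i))"
    and squarefree: "\<And>i. i \<in> I \<Longrightarrow> squarefree (f i)"
  shows "\<exists>d. \<forall>i\<in>I. degree (f i) \<le> d"
proof (intro exI ballI)
  let ?Q = "\<Prod>(\<Union>i\<in>I. prime_factors (f i))"
  have "?Q \<noteq> 0"
    using finite by (auto simp: prod_zero_iff)
  fix i assume "i \<in> I"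
  have "f i dvd \<Prod>(prime_factors (f i))"
    using squarefree[OF \<open>i \<in> I\<close>] by (rule squarefree_dvd_prod_prime_factors)
  also have "\<dots> dvd ?Q"
    using finite \<open>i \<in> I\<close> by (intro prod_dvd_prod_subset) auto
  finally show "degree (f i) \<le> degree ?Q"
    using \<open>?Q \<noteq> 0\<close> by (rule dvd_imp_degree_le)
qed

lemma infinite_prime_factors_tau:
  assumes "infinite I" and nonzero: "\<And>i. i \<in> I \<Longrightarrow> of_nat (Suc i) \<noteq> (0 :: 'a::field_gcd)"
  shows "infinite (\<Union>i\<in>I. prime_factors (tau i :: 'a poly poly))"
proof
  assume "finite (\<Union>i\<in>I. prime_factors (tau i :: 'a poly poly))"
  then obtain d where "\<forall>i\<in>I. degree (tau i :: 'a poly poly) \<le> d"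
    using bounded_degree_if_finite_prime_factors squarefree_tau nonzero by blast
  then have "I \<subseteq> {..d}"
    by (auto simp: degree_tau)
  with \<open>infinite I\<close> show False
    using finite_subset by blast
qed

lemma of_nat_Suc_char_power_minus_two_neq_zero:
  assumes "prime CHAR('a::semiring_1)" and "m > 0"
  shows "of_nat (Suc (CHAR('a) ^ m - 2)) \<noteq> (0 :: 'a)"
proof
  let ?p = "CHAR('a)"
  have "2 \<le> ?p ^ 1"
    using prime_ge_2_nat[OF assms(1)] by simp
  also have "\<dots> \<le> ?p ^ m"
    using \<open>m > 0\<close> prime_ge_1_nat[OF assms(1)] by (intro power_increasing) simp_all
  finally have power_ge_2: "2 \<le> ?p ^ m" .
  then have Suc_eq: "Suc (?p ^ m - 2) = ?p ^ m - 1"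
    by simp
  assume "of_nat (Suc (?p ^ m - 2)) = (0 :: 'a)"
  then have "?p dvd ?p ^ m - 1"
    by (simp only: Suc_eq of_nat_eq_0_iff_char_dvd)
  moreover have "?p dvd ?p ^ m"
    using \<open>m > 0\<close> by simp
  ultimately have "?p dvd ?p ^ m - (?p ^ m - 1)"
    by (rule dvd_diff_nat[rotated])
  with power_ge_2 have "?p dvd 1"
    by simp
  with assms(1) show False
    by simp
qed

lemma infinite_of_nat_Suc_neq_zero:
  assumes "infinite S"
    and "CHAR('a) = 0 \<or> (prime CHAR('a) \<and> infinite {n \<in> S. \<exists>m>0. n = CHAR('a) ^ m - 2})"
  shows "infinite {i \<in> S. of_nat (Suc i) \<noteq> (0 :: 'a::semiring_1)}"
  using assms(2)
proof
  assume "CHAR('a) = 0"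
  then have "{i \<in> S. of_nat (Suc i) \<noteq> (0 :: 'a)} = S"
    by (simp add: of_nat_eq_0_iff_char_dvd del: of_nat_Suc)
  with \<open>infinite S\<close> show ?thesis
    by simp
next
  assume char: "prime CHAR('a) \<and> infinite {n \<in> S. \<exists>m>0. n = CHAR('a) ^ m - 2}"
  then have "{n \<in> S. \<exists>m>0. n = CHAR('a) ^ m - 2} \<subseteq> {i \<in> S. of_nat (Suc i) \<noteq> (0 :: 'a)}"
    using of_nat_Suc_char_power_minus_two_neq_zero by blast
  with char show ?thesis
    using finite_subset by blast
qed

theorem lemma1p1:
  fixes S :: "nat set"
  shows "(\<forall>i\<ge>1. det (Bmat i) = (tau i :: 'a::field_gcd poly poly))
    \<and> ((S \<subseteq> {1..} \<and> infinite S \<and>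
         (CHAR('a) = 0 \<or>
          (prime CHAR('a) \<and> infinite {n \<in> S. \<exists>m>0. n = CHAR('a) ^ m - 2})))
        \<longrightarrow> infinite (\<Union>i\<in>S. prime_factors (tau i :: 'a poly poly)))"
proof (intro conjI impI)
  show "\<forall>i\<ge>1. det (Bmat i) = (tau i :: 'a poly poly)"
    by (simp add: det_Bmat)
next
  let ?I = "{i \<in> S. of_nat (Suc i) \<noteq> (0 :: 'a)}"
  assume "S \<subseteq> {1..} \<and> infinite S \<and>
    (CHAR('a) = 0 \<or> (prime CHAR('a) \<and> infinite {n \<in> S. \<exists>m>0. n = CHAR('a) ^ m - 2}))"
  then have "infinite ?I"
    by (intro infinite_of_nat_Suc_neq_zero) simp_all
  then have "infinite (\<Union>i\<in>?I. prime_factors (tau i :: 'a poly poly))"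
    by (rule infinite_prime_factors_tau) simp
  then show "infinite (\<Union>i\<in>S. prime_factors (tau i :: 'a poly poly))"
    by (rule infinite_super[rotated]) auto
qed

end
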